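(* In every execution of the Minimmit protocol (described in the context), correct processors vote for at most one block in each view: if $p_i$ is correct then, for each $v\in \mathbb{N}_{\geq 1}$, there exists at most one block $b$ with $b.\text{view}=v$ such that $p_i$ sends a message $(\text{vote},b)$.
   Context: Setting. There are $n$ processors $\Pi=\{p_0,\dots,p_{n-1}\}$ and an integer $f$ with $5f+1\le n$. At most $f$ processors may be corrupted by an adversary during the execution and then behave arbitrarily (Byzantine); processors never corrupted are called correct. Processors communicate over point-to-point authenticated channels; every message is signed by its sender; a PKI validates signatures and $H$ is a collision-resistant hash function; attention is restricted to executions in which the adversary cannot forge signatures or find hash collisions. Time is divided into timeslots $t\in\mathbb{N}_{\ge 0}$ (partial synchrony): a message sent at time $t$ arrives at some time $t'>t$ with $t'\le \max\{\text{GST},t\}+\Delta$, where $\Delta$ is known to the protocol and GST is unknown and chosen by the adversary (who also chooses delivery times subject to this constraint). Clocks of correct processors advance in real time. When a correct processor sends a message to all processors, it regards that message as immediately received by itself. Transactions are unique messages signed by the environment; each timeslot each processor may receive a finite set of transactions. Each processor $p_i$ maintains an append-only log $\text{log}_i$ of distinct transactions, $\text{log}_i(t)$ denoting its value at the end of timeslot $t$. Blocks. $\text{lead}(v):=p_j$ with $j=v \bmod n$. The genesis block is $b_{\text{gen}}=(0,\lambda,\lambda)$ ($\lambda$ the empty sequence). Any other block is a tuple $b=(v,\text{Tr},h)$ signed by $\text{lead}(v)$, with $v\in\mathbb{N}_{\ge1}$ ($b.\text{view}=v$, "a view $v$ block"), $\text{Tr}=b.\text{Tr}$ a sequence of distinct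 transactions, and $h=b.h$ a hash value; its parent is the block $b'$ with $H(b')=h$. The ancestors of $b$ are $b$ and the ancestors of its parent ($b_{\text{gen}}$ has only itself). Two blocks are inconsistent if neither is an ancestor of the other. To finalise $b$ means: upon obtaining all ancestors of $b$, the processor sets its log to extend the concatenation of $b'.\text{Tr}$ over ancestors $b'$ of $b$ (with duplicates removed). Messages. A vote for $b$ is $(\text{vote},b)$. An M-notarization for $b$ is a set of $2f+1$ votes for $b$ signed by distinct processors; an L-notarization for $b$ is a set of $n-f$ votes for $b$ signed by distinct processors. A nullify$(v)$ message is $(\text{nullify},v)$; a nullification for view $v$ is a set of $2f+1$ nullify$(v)$ messages signed by distinct processors. Local state of each processor: $\mathtt{S}$, the set of all received messages (automatically updated; it contains a block $b$ if it contains any message having $b$ as an entry; initially it contains only $b_{\text{gen}}$ and an M- and L-notarization for $b_{\text{gen}}$); the current view $\mathtt{v}$ (initially 1; a processor enters view $v$ when $\mathtt{v}$ becomes $v$); a timer $\mathtt{T}$ (initially 0, increasing in real time, reset to 0 upon entering a new view); $\mathtt{nullified}$ (initially false) and $\mathtt{notarized}$ (initially $\bot$, a value different from every block). SelectParent$(\mathtt{S},\mathtt{v})$: let $v'<\mathtt{v}$ be greatest such that $\mathtt{S}$ contains an M-notarization for some block of view $v'$; output the lexicographically least such block. ProposeChild$(b,v)$: form a sequence Tr of distinct transactions containing all transactions received and not in $b'.\text{Tr}$ for any ancestor $b'\in\mathtt{S}$ of $b$, and send the block $(v,\text{Tr},H(b))$ to all processors. $\mathtt{S}$ contains a valid proposal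 $b$ for view $v$ if $\mathtt{S}$ contains (i) precisely one block of the form $b=(v,\text{Tr},h)$ signed by $\text{lead}(v)$, (ii) an M-notarization for some $b'$ with $H(b')=h$, say $b'.\text{view}=v'$, and (iii) a nullification for each view in the open interval $(v',v)$. At timeslot $t$ a nullification $N\subseteq\mathtt{S}$ for a view $v$ is new if $\mathtt{S}$ contained no nullification for $v$ at any earlier timeslot and $N$ is lexicographically least among nullifications for $v$ in $\mathtt{S}$; new M-notarizations and new L-notarizations for a block $b$ are defined analogously. Protocol (Minimmit): at every timeslot, correct $p_i$ does, in order: (1) send new nullifications in $\mathtt{S}$ to all processors; (2) send new M- and L-notarizations in $\mathtt{S}$ to all; (3) if $p_i=\text{lead}(\mathtt{v})$, execute ProposeChild(SelectParent$(\mathtt{S},\mathtt{v}),\mathtt{v})$; (4) if $\mathtt{S}$ contains a valid proposal $b$ for view $\mathtt{v}$ and $\mathtt{notarized}=\bot$ and $\mathtt{nullified}=$ false, set $\mathtt{notarized}:=b$ and send $(\text{vote},b)$ to all; (5) if $\mathtt{T}=2\Delta$, $\mathtt{nullified}=$ false and $\mathtt{notarized}=\bot$, set $\mathtt{nullified}:=$ true and send $(\text{nullify},\mathtt{v})$ to all; (6) if $\mathtt{S}$ contains a nullification for $\mathtt{v}$, set $\mathtt{v}:=\mathtt{v}+1$, $\mathtt{nullified}:=$ false, $\mathtt{notarized}:=\bot$; (7) if $\mathtt{S}$ contains an M-notarization for some $b$ with $b.\text{view}=\mathtt{v}$: if $\mathtt{notarized}=\bot$ and $\mathtt{nullified}=$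 false send $(\text{vote},b)$ to all; then set $\mathtt{v}:=\mathtt{v}+1$, $\mathtt{nullified}:=$ false, $\mathtt{notarized}:=\bot$; (8) if $\mathtt{nullified}=$ false, $\mathtt{notarized}\neq\bot$, and $\mathtt{S}$ contains at least $2f+1$ messages signed by distinct processors, each either $(\text{nullify},\mathtt{v})$ or $(\text{vote},b)$ for some $b$ with $b.\text{view}=\mathtt{v}$ and $b\ne\mathtt{notarized}$, then set $\mathtt{nullified}:=$ true and send $(\text{nullify},\mathtt{v})$ to all; (9) if $\mathtt{S}$ contains a new L-notarization for a block $b$, finalise $b$. *)

theory Defs
  imports Main
begin

text \<open>Processors are indices p < n. Blocks (v, Tr, h); the parent hash of the genesis
block is the empty sequence, modelled as None. A block of view v is (implicitly) signed
by lead(v).\<close>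

datatype ('tx,'h) block = Block (bview: nat) (btrs: "'tx list") (bpar: "'h option")

definition gen :: "('tx,'h) block" where
  "gen = Block 0 [] None"

definition is_block :: "('tx,'h) block \<Rightarrow> bool" where
  "is_block b \<longleftrightarrow> b = gen \<or> (bview b \<ge> 1 \<and> distinct (btrs b) \<and> bpar b \<noteq> None)"

text \<open>Atomic signed messages: a block proposal (signed by lead of its view), a vote
(signer, block), a nullify message (signer, view), and a transaction (signed by the
environment). Notarizations/nullifications are sets of such atomic messages.\<close>

datatype ('tx,'h) smsg =
    SBlock "('tx,'h) block"
  | SVote nat "('tx,'h) block"
  | SNull nat nat
  | STx 'tx

definition lead :: "nat \<Rightarrow> nat \<Rightarrow> nat" where
  "lead n v = v mod n"

definition signed_by :: "nat \<Rightarrow> nat \<Rightarrow> ('tx,'h) smsg \<Rightarrow> bool" where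
  "signed_by n p m = (case m of
      SBlock b \<Rightarrow> bview b \<ge> 1 \<and> lead n (bview b) = p
    | SVote q _ \<Rightarrow> q = p
    | SNull q _ \<Rightarrow> q = p
    | STx _ \<Rightarrow> False)"

definition blocks_in :: "('tx,'h) smsg set \<Rightarrow> ('tx,'h) block set" where
  "blocks_in S = insert gen {b. is_block b \<and> (SBlock b \<in> S \<or> (\<exists>q. SVote q b \<in> S))}"

definition voters :: "nat \<Rightarrow> ('tx,'h) smsg set \<Rightarrow> ('tx,'h) block \<Rightarrow> nat set" where
  "voters n S b = {q. q < n \<and> SVote q b \<in> S}"

definition nullifiers :: "nat \<Rightarrow> ('tx,'h) smsg set \<Rightarrow> nat \<Rightarrow> nat set" where
  "nullifiers n S v = {q. q < n \<and> SNull q v \<in> S}"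

definition has_Mnot :: "nat \<Rightarrow> nat \<Rightarrow> ('tx,'h) smsg set \<Rightarrow> ('tx,'h) block \<Rightarrow> bool" where
  "has_Mnot n f S b \<longleftrightarrow> b = gen \<or> (is_block b \<and> card (voters n S b) \<ge> 2*f+1)"

definition has_Lnot :: "nat \<Rightarrow> nat \<Rightarrow> ('tx,'h) smsg set \<Rightarrow> ('tx,'h) block \<Rightarrow> bool" where
  "has_Lnot n f S b \<longleftrightarrow> b = gen \<or> (is_block b \<and> card (voters n S b) \<ge> n - f)"

definition has_null :: "nat \<Rightarrow> nat \<Rightarrow> ('tx,'h) smsg set \<Rightarrow> nat \<Rightarrow> bool" where
  "has_null n f S v \<longleftrightarrow> card (nullifiers n S v) \<ge> 2*f+1"

definition is_notarization :: "nat \<Rightarrow> nat \<Rightarrow> ('tx,'h) smsg set \<Rightarrow> ('tx,'h) block \<Rightarrow> ('tx,'h) smsg set \<Rightarrow> bool" where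
  "is_notarization n k S b N \<longleftrightarrow>
     (\<exists>Q. Q \<subseteq> voters n S b \<and> card Q = k \<and> N = (\<lambda>q. SVote q b) ` Q)"

definition is_nullification :: "nat \<Rightarrow> nat \<Rightarrow> ('tx,'h) smsg set \<Rightarrow> nat \<Rightarrow> ('tx,'h) smsg set \<Rightarrow> bool" where
  "is_nullification n f S v N \<longleftrightarrow>
     (\<exists>Q. Q \<subseteq> nullifiers n S v \<and> card Q = 2*f+1 \<and> N = (\<lambda>q. SNull q v) ` Q)"

inductive_set ancestors :: "(('tx,'h) block \<Rightarrow> 'h) \<Rightarrow> ('tx,'h) smsg set \<Rightarrow> ('tx,'h) block \<Rightarrow> ('tx,'h) block set"
  for H S b where
  self: "b \<in> ancestors H S b"
| parent: "c \<in> ancestors H S b \<Longrightarrow> c' \<in> blocks_in S \<Longrightarrow> bpar c = Some (H c') \<Longrightarrow> c' \<in> ancestors H S b"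

definition valid_proposal :: "nat \<Rightarrow> nat \<Rightarrow> (('tx,'h) block \<Rightarrow> 'h) \<Rightarrow> ('tx,'h) smsg set \<Rightarrow> nat \<Rightarrow> ('tx,'h) block \<Rightarrow> bool" where
  "valid_proposal n f H S v b \<longleftrightarrow>
     {c \<in> blocks_in S. bview c = v} = {b} \<and>
     (\<exists>b' \<in> blocks_in S. bpar b = Some (H b') \<and> has_Mnot n f S b' \<and>
        (\<forall>w. bview b' < w \<and> w < v \<longrightarrow> has_null n f S w))"

text \<open>Possible outputs of SelectParent(S, v) (lexicographic tie-breaking relaxed to any choice).\<close>
definition select_parent :: "nat \<Rightarrow> nat \<Rightarrow> ('tx,'h) smsg set \<Rightarrow> nat \<Rightarrow> ('tx,'h) block \<Rightarrow> bool" where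
  "select_parent n f S v par \<longleftrightarrow>
     par \<in> blocks_in S \<and> has_Mnot n f S par \<and> bview par < v \<and>
     (\<forall>c \<in> blocks_in S. has_Mnot n f S c \<and> bview c < v \<longrightarrow> bview c \<le> bview par)"

definition propose_child :: "(('tx,'h) block \<Rightarrow> 'h) \<Rightarrow> ('tx,'h) smsg set \<Rightarrow> ('tx,'h) block \<Rightarrow> nat \<Rightarrow> ('tx,'h) smsg set \<Rightarrow> bool" where
  "propose_child H S par v Out \<longleftrightarrow>
     (\<exists>Tr. distinct Tr \<and>
        {tx. STx tx \<in> S} - (\<Union>c \<in> ancestors H S par. set (btrs c)) \<subseteq> set Tr \<and>
        Out = {SBlock (Block v Tr (Some (H par)))})"

record ('tx,'h) pstate =
  cview :: nat
  tentry :: nat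
  nullified :: bool
  notarized :: "('tx,'h) block option"

definition init_state :: "('tx,'h) pstate" where
  "init_state = \<lparr>cview = 1, tentry = 0, nullified = False, notarized = None\<rparr>"

text \<open>One timeslot t of a correct processor p. Sprev: S at the end of timeslot t-1;
S0: S at the start of timeslot t (i.e. including messages arriving at t).
Messages sent during the timeslot are added to S immediately. The timer equals
t - tentry. Step (9) (finalisation) sends no messages and does not touch the
variables below, so it is omitted.\<close>
definition proto_step ::
  "nat \<Rightarrow> nat \<Rightarrow> nat \<Rightarrow> (('tx,'h) block \<Rightarrow> 'h) \<Rightarrow> nat \<Rightarrow> nat
   \<Rightarrow> ('tx,'h) smsg set \<Rightarrow> ('tx,'h) smsg set
   \<Rightarrow> ('tx,'h) pstate \<Rightarrow> ('tx,'h) pstate \<Rightarrow> ('tx,'h) smsg set \<Rightarrow> bool" where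
  "proto_step n f Delta H p t Sprev S0 st st' out \<longleftrightarrow>
   (\<exists>O1 O2 O3 O4 O5 O7 O8 st4 st5 st6 st7.
     \<comment> \<open>(1) forward new nullifications\<close>
     (\<exists>NF. O1 = \<Union>{NF w |w. has_null n f S0 w \<and> \<not> has_null n f Sprev w} \<and>
        (\<forall>w. has_null n f S0 w \<and> \<not> has_null n f Sprev w \<longrightarrow> is_nullification n f S0 w (NF w))) \<and>
     \<comment> \<open>(2) forward new M- and L-notarizations\<close>
     (\<exists>NM NL. O2 = \<Union>{NM b |b. has_Mnot n f S0 b \<and> \<not> has_Mnot n f Sprev b}
                 \<union> \<Union>{NL b |b. has_Lnot n f S0 b \<and> \<not> has_Lnot n f Sprev b} \<and>
        (\<forall>b. has_Mnot n f S0 b \<and> \<not> has_Mnot n f Sprev b \<longrightarrow> is_notarization n (2*f+1) S0 b (NM b)) \<and>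
        (\<forall>b. has_Lnot n f S0 b \<and> \<not> has_Lnot n f Sprev b \<longrightarrow> is_notarization n (n-f) S0 b (NL b))) \<and>
     \<comment> \<open>(3) leader proposes\<close>
     (if p = lead n (cview st)
      then (\<exists>par. select_parent n f (S0 \<union> O1 \<union> O2) (cview st) par \<and>
                  propose_child H (S0 \<union> O1 \<union> O2) par (cview st) O3)
      else O3 = {}) \<and>
     \<comment> \<open>(4) vote for a valid proposal\<close>
     (if (\<exists>b. valid_proposal n f H (S0 \<union> O1 \<union> O2 \<union> O3) (cview st) b)
          \<and> notarized st = None \<and> \<not> nullified st
      then (\<exists>b. valid_proposal n f H (S0 \<union> O1 \<union> O2 \<union> O3) (cview st) b \<and>
                st4 = st\<lparr>notarized := Some b\<rparr> \<and> O4 = {SVote p b})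
      else st4 = st \<and> O4 = {}) \<and>
     \<comment> \<open>(5) timeout\<close>
     (if t = tentry st4 + 2*Delta \<and> \<not> nullified st4 \<and> notarized st4 = None
      then st5 = st4\<lparr>nullified := True\<rparr> \<and> O5 = {SNull p (cview st4)}
      else st5 = st4 \<and> O5 = {}) \<and>
     \<comment> \<open>(6) nullification for the current view\<close>
     (if has_null n f (S0 \<union> O1 \<union> O2 \<union> O3 \<union> O4 \<union> O5) (cview st5)
      then st6 = \<lparr>cview = cview st5 + 1, tentry = t, nullified = False, notarized = None\<rparr>
      else st6 = st5) \<and>
     \<comment> \<open>(7) M-notarization for a block of the current view\<close>
     (if (\<exists>b. has_Mnot n f (S0 \<union> O1 \<union> O2 \<union> O3 \<union> O4 \<union> O5) b \<and> bview b = cview st6)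
      then (\<exists>b. has_Mnot n f (S0 \<union> O1 \<union> O2 \<union> O3 \<union> O4 \<union> O5) b \<and> bview b = cview st6 \<and>
               O7 = (if notarized st6 = None \<and> \<not> nullified st6 then {SVote p b} else {}) \<and>
               st7 = \<lparr>cview = cview st6 + 1, tentry = t, nullified = False, notarized = None\<rparr>)
      else st7 = st6 \<and> O7 = {}) \<and>
     \<comment> \<open>(8) nullify after conflicting evidence\<close>
     (if (\<exists>b0. \<not> nullified st7 \<and> notarized st7 = Some b0 \<and>
            card {q. q < n \<and> (SNull q (cview st7) \<in> S0 \<union> O1 \<union> O2 \<union> O3 \<union> O4 \<union> O5 \<union> O7 \<or>
                    (\<exists>b. SVote q b \<in> S0 \<union> O1 \<union> O2 \<union> O3 \<union> O4 \<union> O5 \<union> O7 \<and>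
                         bview b = cview st7 \<and> b \<noteq> b0))} \<ge> 2*f+1)
      then st' = st7\<lparr>nullified := True\<rparr> \<and> O8 = {SNull p (cview st7)}
      else st' = st7 \<and> O8 = {}) \<and>
     out = O1 \<union> O2 \<union> O3 \<union> O4 \<union> O5 \<union> O7 \<union> O8)"

definition S_start :: "(nat \<Rightarrow> ('tx,'h) smsg set) \<Rightarrow> (nat \<Rightarrow> ('tx,'h) smsg set) \<Rightarrow> nat \<Rightarrow> ('tx,'h) smsg set" where
  "S_start A out t = (\<Union>t'\<le>t. A t') \<union> (\<Union>t'<t. out t')"

definition S_end :: "(nat \<Rightarrow> ('tx,'h) smsg set) \<Rightarrow> (nat \<Rightarrow> ('tx,'h) smsg set) \<Rightarrow> nat \<Rightarrow> ('tx,'h) smsg set" where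
  "S_end A out t = S_start A out t \<union> out t"

text \<open>An execution as seen by a correct processor p: A t is the finite set of messages
arriving at p at timeslot t (chosen by the adversary/environment/network); messages
signed by p arrive only after p sent them (unforgeability); st t is p's state at the
end of timeslot t and out t the set of messages p sends (to all) at timeslot t.\<close>
definition correct_exec ::
  "nat \<Rightarrow> nat \<Rightarrow> nat \<Rightarrow> (('tx,'h) block \<Rightarrow> 'h) \<Rightarrow> nat
   \<Rightarrow> (nat \<Rightarrow> ('tx,'h) smsg set) \<Rightarrow> (nat \<Rightarrow> ('tx,'h) pstate) \<Rightarrow> (nat \<Rightarrow> ('tx,'h) smsg set) \<Rightarrow> bool" where
  "correct_exec n f Delta H p A st out \<longleftrightarrow>
     (\<forall>t. finite (A t)) \<and>
     (\<forall>t m. m \<in> A t \<and> signed_by n p m \<longrightarrow> (\<exists>t'<t. m \<in> out t')) \<and>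
     (\<forall>t. proto_step n f Delta H p t
            (if t = 0 then {} else S_end A out (t - 1)) (S_start A out t)
            (if t = 0 then init_state else st (t - 1)) (st t) (out t))"

end

theory Submission
  imports Defs
begin

text \<open>A correct processor votes only in step (4), when it has not yet voted in its current
view, and in step (7), after which it immediately leaves that view; views never decrease.
Hence the following is invariant: every block the processor has voted for lies in an earlier
view, or in the current view and then it is the block recorded in \<open>notarized\<close>; and no two
of these blocks share a view. Messages signed by the processor reach it only after it has sent
them, so its own votes in \<open>S\<close> are exactly the votes it sent earlier.\<close>

definition own_votes :: "nat \<Rightarrow> ('tx,'h) smsg set \<Rightarrow> ('tx,'h) block set" where
  "own_votes p S = {b. SVote p b \<in> S}"

lemma own_votes_Un [simp]: "own_votes p (A \<union> B) = own_votes p A \<union> own_votes p B"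
  by (auto simp: own_votes_def)

lemma own_votes_UN [simp]: "own_votes p (\<Union>i\<in>I. S i) = (\<Union>i\<in>I. own_votes p (S i))"
  by (auto simp: own_votes_def)

lemma own_votes_forwarded_nullifications:
  assumes "\<forall>w. P w \<longrightarrow> is_nullification n f S w (NF w)"
  shows "own_votes p (\<Union>{NF w |w. P w}) = {}"
  using assms by (auto simp: own_votes_def is_nullification_def)

lemma own_votes_forwarded_notarizations:
  assumes "\<forall>b. P b \<longrightarrow> is_notarization n k S b (N b)"
  shows "own_votes p (\<Union>{N b |b. P b}) \<subseteq> own_votes p S"
  using assms by (fastforce simp: own_votes_def is_notarization_def voters_def)

lemma own_votes_propose_child: "propose_child H S par v Out \<Longrightarrow> own_votes p Out = {}"
  by (auto simp: own_votes_def propose_child_def)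

lemma valid_proposal_view: "valid_proposal n f H S v b \<Longrightarrow> bview b = v"
  unfolding valid_proposal_def by blast

definition vote_inv :: "('tx,'h) block set \<Rightarrow> ('tx,'h) pstate \<Rightarrow> bool" where
  "vote_inv W s \<longleftrightarrow>
     (\<forall>b\<in>W. bview b < cview s \<or> (bview b = cview s \<and> notarized s = Some b)) \<and> inj_on bview W"

definition progresses :: "('tx,'h) pstate \<Rightarrow> ('tx,'h) pstate \<Rightarrow> bool" where
  "progresses s s' \<longleftrightarrow> cview s < cview s' \<or> (cview s' = cview s \<and> notarized s' = notarized s)"

definition vote_transition :: "('tx,'h) pstate \<Rightarrow> ('tx,'h) block set \<Rightarrow> ('tx,'h) pstate \<Rightarrow> bool" where
  "vote_transition s V s' \<longleftrightarrow>
     (V = {} \<and> progresses s s') \<or>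
     (\<exists>b. V = {b} \<and> notarized s = None \<and> bview b = cview s \<and>
          progresses (s\<lparr>notarized := Some b\<rparr>) s')"

lemma progresses_refl: "progresses s s"
  by (simp add: progresses_def)

lemma progresses_trans: "progresses s1 s2 \<Longrightarrow> progresses s2 s3 \<Longrightarrow> progresses s1 s3"
  unfolding progresses_def by auto

lemma vote_transition_progresses:
  "vote_transition s V s1 \<Longrightarrow> progresses s1 s2 \<Longrightarrow> vote_transition s V s2"
  unfolding vote_transition_def by (blast intro: progresses_trans)

lemma vote_inv_subset: "vote_inv W s \<Longrightarrow> W' \<subseteq> W \<Longrightarrow> vote_inv W' s"
  unfolding vote_inv_def by (blast intro: inj_on_subset)

lemma vote_inv_progresses: "vote_inv W s \<Longrightarrow> progresses s s' \<Longrightarrow> vote_inv W s'"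
  unfolding vote_inv_def progresses_def by fastforce

lemma vote_inv_cast:
  assumes "vote_inv W s" and "notarized s = None" and "bview b = cview s"
  shows "vote_inv (insert b W) (s\<lparr>notarized := Some b\<rparr>)"
proof -
  have earlier: "bview c < cview s" if "c \<in> W" for c
    using assms(1,2) that unfolding vote_inv_def by auto
  then have "bview b \<notin> bview ` W"
    using assms(3) by fastforce
  then show ?thesis
    using assms(1,3) earlier unfolding vote_inv_def by auto
qed

lemma vote_inv_vote_transition:
  "vote_inv W s \<Longrightarrow> vote_transition s V s' \<Longrightarrow> vote_inv (W \<union> V) s'"
  unfolding vote_transition_def
  by (metis Un_empty_right Un_insert_right vote_inv_cast vote_inv_progresses)

lemma proto_step_vote_transitions:
  assumes "proto_step n f Delta H p t Sprev S0 st st' out"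
  obtains s V4 V7 where "own_votes p out \<subseteq> own_votes p S0 \<union> V4 \<union> V7"
    and "vote_transition st V4 s" and "vote_transition s V7 st'"
proof -
  obtain O1 O2 O3 O4 O5 O7 O8 st4 st5 st6 st7 NF NM NL where
     O1: "O1 = \<Union>{NF w |w. has_null n f S0 w \<and> \<not> has_null n f Sprev w}" and
     NF: "\<forall>w. has_null n f S0 w \<and> \<not> has_null n f Sprev w \<longrightarrow> is_nullification n f S0 w (NF w)" and
     O2: "O2 = \<Union>{NM b |b. has_Mnot n f S0 b \<and> \<not> has_Mnot n f Sprev b}
                 \<union> \<Union>{NL b |b. has_Lnot n f S0 b \<and> \<not> has_Lnot n f Sprev b}" and
     NM: "\<forall>b. has_Mnot n f S0 b \<and> \<not> has_Mnot n f Sprev b \<longrightarrow> is_notarization n (2*f+1) S0 b (NM b)" and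
     NL: "\<forall>b. has_Lnot n f S0 b \<and> \<not> has_Lnot n f Sprev b \<longrightarrow> is_notarization n (n-f) S0 b (NL b)" and
     c3: "if p = lead n (cview st)
      then (\<exists>par. select_parent n f (S0 \<union> O1 \<union> O2) (cview st) par \<and>
                  propose_child H (S0 \<union> O1 \<union> O2) par (cview st) O3)
      else O3 = {}" and
     c4: "if (\<exists>b. valid_proposal n f H (S0 \<union> O1 \<union> O2 \<union> O3) (cview st) b)
          \<and> notarized st = None \<and> \<not> nullified st
      then (\<exists>b. valid_proposal n f H (S0 \<union> O1 \<union> O2 \<union> O3) (cview st) b \<and>
                st4 = st\<lparr>notarized := Some b\<rparr> \<and> O4 = {SVote p b})
      else st4 = st \<and> O4 = {}" and
     c5: "if t = tentry st4 + 2*Delta \<and> \<not> nullified st4 \<and> notarized st4 = None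
      then st5 = st4\<lparr>nullified := True\<rparr> \<and> O5 = {SNull p (cview st4)}
      else st5 = st4 \<and> O5 = {}" and
     c6: "if has_null n f (S0 \<union> O1 \<union> O2 \<union> O3 \<union> O4 \<union> O5) (cview st5)
      then st6 = \<lparr>cview = cview st5 + 1, tentry = t, nullified = False, notarized = None\<rparr>
      else st6 = st5" and
     c7: "if (\<exists>b. has_Mnot n f (S0 \<union> O1 \<union> O2 \<union> O3 \<union> O4 \<union> O5) b \<and> bview b = cview st6)
      then (\<exists>b. has_Mnot n f (S0 \<union> O1 \<union> O2 \<union> O3 \<union> O4 \<union> O5) b \<and> bview b = cview st6 \<and>
               O7 = (if notarized st6 = None \<and> \<not> nullified st6 then {SVote p b} else {}) \<and>
               st7 = \<lparr>cview = cview st6 + 1, tentry = t, nullified = False, notarized = None\<rparr>)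
      else st7 = st6 \<and> O7 = {}" and
     c8: "if (\<exists>b0. \<not> nullified st7 \<and> notarized st7 = Some b0 \<and>
            card {q. q < n \<and> (SNull q (cview st7) \<in> S0 \<union> O1 \<union> O2 \<union> O3 \<union> O4 \<union> O5 \<union> O7 \<or>
                    (\<exists>b. SVote q b \<in> S0 \<union> O1 \<union> O2 \<union> O3 \<union> O4 \<union> O5 \<union> O7 \<and>
                         bview b = cview st7 \<and> b \<noteq> b0))} \<ge> 2*f+1)
      then st' = st7\<lparr>nullified := True\<rparr> \<and> O8 = {SNull p (cview st7)}
      else st' = st7 \<and> O8 = {}" and
     out: "out = O1 \<union> O2 \<union> O3 \<union> O4 \<union> O5 \<union> O7 \<union> O8"
    using assms unfolding proto_step_def by blast
  have "own_votes p O1 = {}"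
    unfolding O1 using NF by (rule own_votes_forwarded_nullifications)
  moreover have "own_votes p O2 \<subseteq> own_votes p S0"
    unfolding O2 own_votes_Un
    using own_votes_forwarded_notarizations[OF NM] own_votes_forwarded_notarizations[OF NL] by blast
  moreover have "own_votes p O3 = {}"
  proof -
    have "O3 = {} \<or> (\<exists>par. propose_child H (S0 \<union> O1 \<union> O2) par (cview st) O3)"
      using c3 by (cases "p = lead n (cview st)") auto
    then show ?thesis
      by (auto simp: own_votes_def dest: own_votes_propose_child[where p = p])
  qed
  moreover have "own_votes p O5 = {}"
    using c5 by (auto simp: own_votes_def split: if_splits)
  moreover have step8: "O8 \<subseteq> {SNull p (cview st7)} \<and> (st' = st7 \<or> st' = st7\<lparr>nullified := True\<rparr>)"
    using c8 by (split if_split_asm) auto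
  then have "own_votes p O8 = {}"
    by (auto simp: own_votes_def)
  ultimately have "own_votes p out \<subseteq> own_votes p S0 \<union> own_votes p O4 \<union> own_votes p O7"
    unfolding out by auto
  moreover have "vote_transition st (own_votes p O4) st4"
  proof (cases "(\<exists>b. valid_proposal n f H (S0 \<union> O1 \<union> O2 \<union> O3) (cview st) b)
          \<and> notarized st = None \<and> \<not> nullified st")
    case True
    then obtain b where "valid_proposal n f H (S0 \<union> O1 \<union> O2 \<union> O3) (cview st) b"
      and "st4 = st\<lparr>notarized := Some b\<rparr>" and "O4 = {SVote p b}"
      using c4 by auto
    then show ?thesis
      using True valid_proposal_view
      by (auto simp: vote_transition_def own_votes_def progresses_refl)
  next
    case False
    then show ?thesis
      using c4 by (simp add: vote_transition_def own_votes_def progresses_refl)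
  qed
  then have "vote_transition st (own_votes p O4) st6"
    using c5 c6 by (auto simp: progresses_def split: if_splits intro: vote_transition_progresses)
  moreover have "vote_transition st6 (own_votes p O7) st7"
    using c7 by (auto simp: vote_transition_def progresses_def own_votes_def split: if_splits)
  then have "vote_transition st6 (own_votes p O7) st'"
    using step8 by (auto simp: progresses_def intro: vote_transition_progresses)
  ultimately show thesis
    using that by blast
qed

lemma proto_step_vote_inv:
  assumes "proto_step n f Delta H p t Sprev S0 st st' out" and "vote_inv (own_votes p S0) st"
  shows "vote_inv (own_votes p (S0 \<union> out)) st'"
proof -
  obtain s V4 V7 where votes: "own_votes p out \<subseteq> own_votes p S0 \<union> V4 \<union> V7"
    and "vote_transition st V4 s" and "vote_transition s V7 st'"
    using proto_step_vote_transitions[OF assms(1)] .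
  then have "vote_inv (own_votes p S0 \<union> V4 \<union> V7) st'"
    using assms(2) by (blast intro: vote_inv_vote_transition)
  then show ?thesis
    using votes by (auto intro: vote_inv_subset)
qed

lemma correct_exec_own_votes_S_start:
  assumes "correct_exec n f Delta H p A st out"
  shows "own_votes p (S_start A out t) = (\<Union>t'<t. own_votes p (out t'))"
proof -
  have "signed_by n p (SVote p b)" for b :: "('tx,'h) block"
    by (simp add: signed_by_def)
  then have "own_votes p (A t') \<subseteq> (\<Union>t''<t'. own_votes p (out t''))" for t'
    using assms unfolding correct_exec_def own_votes_def by blast
  then show ?thesis
    unfolding S_start_def by fastforce
qed

lemma correct_exec_own_votes_S_end:
  assumes "correct_exec n f Delta H p A st out"
  shows "own_votes p (S_end A out t) = (\<Union>t'\<le>t. own_votes p (out t'))"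
  unfolding S_end_def correct_exec_own_votes_S_start[OF assms] own_votes_Un
  by (auto simp: le_less)

lemma correct_exec_proto_step_0:
  "correct_exec n f Delta H p A st out \<Longrightarrow>
   proto_step n f Delta H p 0 {} (S_start A out 0) init_state (st 0) (out 0)"
  unfolding correct_exec_def by (elim conjE allE[of _ 0]) simp

lemma correct_exec_proto_step_Suc:
  "correct_exec n f Delta H p A st out \<Longrightarrow>
   proto_step n f Delta H p (Suc t) (S_end A out t) (S_start A out (Suc t))
     (st t) (st (Suc t)) (out (Suc t))"
  unfolding correct_exec_def by (elim conjE allE[of _ "Suc t"]) simp

lemma correct_exec_vote_inv:
  assumes "correct_exec n f Delta H p A st out"
  shows "vote_inv (own_votes p (S_end A out t)) (st t)"
proof (induction t)
  case 0
  have "vote_inv (own_votes p (S_start A out 0)) init_state"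
    using correct_exec_own_votes_S_start[OF assms] by (simp add: vote_inv_def)
  then show ?case
    unfolding S_end_def by (rule proto_step_vote_inv[OF correct_exec_proto_step_0[OF assms]])
next
  case (Suc t)
  have "own_votes p (S_start A out (Suc t)) = own_votes p (S_end A out t)"
    using correct_exec_own_votes_S_start[OF assms] correct_exec_own_votes_S_end[OF assms]
    by (simp add: lessThan_Suc_atMost)
  then have "vote_inv (own_votes p (S_start A out (Suc t))) (st t)"
    using Suc by simp
  then show ?case
    unfolding S_end_def by (rule proto_step_vote_inv[OF correct_exec_proto_step_Suc[OF assms]])
qed

theorem lemma1:
  fixes n f Delta :: nat and H :: "('tx,'h) block \<Rightarrow> 'h" and p v :: nat
    and A :: "nat \<Rightarrow> ('tx,'h) smsg set" and st :: "nat \<Rightarrow> ('tx,'h) pstate"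
    and out :: "nat \<Rightarrow> ('tx,'h) smsg set"
  assumes "5*f + 1 \<le> n" and "p < n"
    and "correct_exec n f Delta H p A st out"
    and "v \<ge> 1"
    and "bview b1 = v" and "\<exists>t. SVote p b1 \<in> out t"
    and "bview b2 = v" and "\<exists>t. SVote p b2 \<in> out t"
  shows "b1 = b2"
proof -
  obtain t1 t2 where "SVote p b1 \<in> out t1" and "SVote p b2 \<in> out t2"
    using assms(6,8) by blast
  then have "b1 \<in> own_votes p (S_end A out (max t1 t2))" "b2 \<in> own_votes p (S_end A out (max t1 t2))"
    unfolding correct_exec_own_votes_S_end[OF assms(3)] by (auto simp: own_votes_def)
  moreover have "inj_on bview (own_votes p (S_end A out (max t1 t2)))"
    using correct_exec_vote_inv[OF assms(3)] unfolding vote_inv_def by blast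
  ultimately show ?thesis
    using assms(5,7) inj_on_contraD by metis
qed

end
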